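(* Let $\Omega\subseteq\mathbb{R}$ and let $f,g:\Omega\to\mathbb{R}$ be twice differentiable such that $f'$ and $g'$ are invertible and the inverse functions $(f')^{-1},(g')^{-1}$ are differentiable and convex. Then for any $p,q\in\Omega$ and $z\in\mathbb{R}$ with $g'(q)=f'(p)-z$: $$q\ge p+\frac{f'(p)-g'(p)-z}{g''(p)},\qquad q\le p+\frac{f'(p)-g'(p)-z}{g''(q)},$$ $$q\ge p+\frac{f'(q)-g'(q)-z}{f''(p)},\qquad q\le p+\frac{f'(q)-g'(q)-z}{f''(q)}.$$ *)

theory Defs
  imports "HOL-Analysis.Analysis"
begin

end

theory Submission
  imports Defs "HOL-Homology.Invariance_of_Domain"
begin

text \<open>A convex inverse lies above its tangents. For \<open>h = (f')\<^sup>-\<^sup>1\<close> the tangent at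
  \<open>f' p\<close> has slope \<open>1 / f'' p\<close>, and evaluating at \<open>f' q\<close> gives
  \<open>q \<ge> p + (f' q - f' p) / f'' p\<close>; exchanging \<open>p\<close> and \<open>q\<close> gives the matching upper
  bound. The same holds for \<open>g'\<close>, and \<open>g' q = f' p - z\<close> turns the numerators
  \<open>f' q - f' p\<close> and \<open>g' q - g' p\<close> into those of the statement.\<close>

lemma DERIV_inv_into_inverse:
  fixes g :: "real \<Rightarrow> real"
  assumes "open \<Omega>" and "inj_on g \<Omega>" and "a \<in> \<Omega>"
    and g: "(g has_real_derivative g') (at a)"
    and "inv_into \<Omega> g differentiable (at (g a))"
  shows "(inv_into \<Omega> g has_real_derivative inverse g') (at (g a))"
proof -
  obtain D where D: "(inv_into \<Omega> g has_real_derivative D) (at (g a))"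
    using assms(5) by (auto simp: real_differentiable_def)
  have "((inv_into \<Omega> g \<circ> g) has_real_derivative D * g') (at a)"
    using DERIV_chain[OF D g] .
  moreover have "((inv_into \<Omega> g \<circ> g) has_real_derivative 1) (at a)"
    by (rule has_field_derivative_transform_within_open[OF DERIV_ident \<open>open \<Omega>\<close> \<open>a \<in> \<Omega>\<close>])
      (use \<open>inj_on g \<Omega>\<close> in simp)
  ultimately have "D * g' = 1"
    by (rule DERIV_unique)
  then have "D = inverse g'"
    by (metis inverse_unique mult.commute)
  with D show ?thesis
    by simp
qed

lemma above_tangent_of_convex_inv_into:
  fixes g g' :: "real \<Rightarrow> real"
  assumes "open \<Omega>"
    and g: "\<And>x. x \<in> \<Omega> \<Longrightarrow> (g has_real_derivative g' x) (at x)"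
    and inj: "inj_on g \<Omega>"
    and diff: "\<And>y. y \<in> g ` \<Omega> \<Longrightarrow> inv_into \<Omega> g differentiable (at y)"
    and conv: "convex_on (g ` \<Omega>) (inv_into \<Omega> g)"
    and a: "a \<in> \<Omega>" and b: "b \<in> \<Omega>"
  shows "a + (g b - g a) / g' a \<le> b"
proof -
  have "continuous_on \<Omega> g"
    using g by (meson DERIV_isCont continuous_at_imp_continuous_on)
  \<comment> \<open>so that \<open>g a\<close> is an interior point of the domain of the convex inverse\<close>
  then have "open (g ` \<Omega>)"
    using invariance_of_domain \<open>open \<Omega>\<close> inj by blast
  moreover have "connected (g ` \<Omega>)"
    using conv convex_connected unfolding convex_on_def by blast
  moreover have "(inv_into \<Omega> g has_real_derivative inverse (g' a)) (at (g a))"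
    using DERIV_inv_into_inverse[OF \<open>open \<Omega>\<close> inj a g[OF a] diff] a by blast
  ultimately have "inverse (g' a) * (g b - g a) \<le> inv_into \<Omega> g (g b) - inv_into \<Omega> g (g a)"
    using a b by (intro convex_on_imp_above_tangent[OF conv])
      (auto simp: interior_open intro: has_field_derivative_at_within)
  then show ?thesis
    using inj a b by (simp add: divide_inverse mult.commute)
qed

theorem lemma34:
  fixes \<Omega> :: "real set"
    and f g f' g' f'' g'' :: "real \<Rightarrow> real"
    and p q z :: real
  assumes "open \<Omega>"
    and f1: "\<And>x. x \<in> \<Omega> \<Longrightarrow> (f has_real_derivative f' x) (at x)"
    and f2: "\<And>x. x \<in> \<Omega> \<Longrightarrow> (f' has_real_derivative f'' x) (at x)"
    and g1: "\<And>x. x \<in> \<Omega> \<Longrightarrow> (g has_real_derivative g' x) (at x)"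
    and g2: "\<And>x. x \<in> \<Omega> \<Longrightarrow> (g' has_real_derivative g'' x) (at x)"
    and finj: "inj_on f' \<Omega>"
    and ginj: "inj_on g' \<Omega>"
    and fdiff: "\<And>y. y \<in> f' ` \<Omega> \<Longrightarrow> inv_into \<Omega> f' differentiable (at y)"
    and gdiff: "\<And>y. y \<in> g' ` \<Omega> \<Longrightarrow> inv_into \<Omega> g' differentiable (at y)"
    and fconv: "convex_on (f' ` \<Omega>) (inv_into \<Omega> f')"
    and gconv: "convex_on (g' ` \<Omega>) (inv_into \<Omega> g')"
    and "p \<in> \<Omega>" and "q \<in> \<Omega>"
    and "g' q = f' p - z"
  shows "q \<ge> p + (f' p - g' p - z) / g'' p \<and>
         q \<le> p + (f' p - g' p - z) / g'' q \<and>
         q \<ge> p + (f' q - g' q - z) / f'' p \<and>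
         q \<le> p + (f' q - g' q - z) / f'' q"
proof -
  have swap: "(b - a) / c = - ((a - b) / c)" for a b c :: real
    by (simp add: minus_divide_left)
  note g_tangent = above_tangent_of_convex_inv_into[OF \<open>open \<Omega>\<close> g2 ginj gdiff gconv]
  note f_tangent = above_tangent_of_convex_inv_into[OF \<open>open \<Omega>\<close> f2 finj fdiff fconv]
  have numerators: "f' p - g' p - z = g' q - g' p" "f' q - g' q - z = f' q - f' p"
    using \<open>g' q = f' p - z\<close> by simp_all
  have "p + (g' q - g' p) / g'' p \<le> q" "q + (g' p - g' q) / g'' q \<le> p"
    using g_tangent \<open>p \<in> \<Omega>\<close> \<open>q \<in> \<Omega>\<close> by auto
  moreover have "p + (f' q - f' p) / f'' p \<le> q" "q + (f' p - f' q) / f'' q \<le> p"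
    using f_tangent \<open>p \<in> \<Omega>\<close> \<open>q \<in> \<Omega>\<close> by auto
  ultimately show ?thesis
    unfolding numerators
    using swap[of "g' p" "g' q" "g'' q"] swap[of "f' p" "f' q" "f'' q"] by linarith
qed

end
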